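(* Suppose that $\Omega$ is a finite signature containing at least one symbol of arity $n\ge 2$, and let $X$ be a finite nonempty set. Then the Polish representation $\Phi_X:\overline{\Omega}_X\mathsf{Fin}_\Omega\to S_{\mathsf M}$ is not injective.
   Context: $\Omega=\biguplus_n\Omega_n$ has finitely many symbols in total (discrete topology), and $X$ is discrete. $\mathsf{Fin}_\Omega$ is the class of all finite (discrete) $\Omega$-algebras, and $\overline{\Omega}_X\mathsf{Fin}_\Omega$ is the free profinite $\Omega$-algebra on $X$ (the profinite $\Omega$-algebra with a map $X\to\overline{\Omega}_X\mathsf{Fin}_\Omega$ whose image generates a dense subalgebra, such that every map from $X$ into a finite $\Omega$-algebra extends uniquely to a continuous homomorphism). Let $\overline{\Omega}_{X\cup\Omega}\mathsf M$ be the free profinite monoid on the finite set $X\cup\Omega$ (disjoint union of $X$ and all $\Omega_k$). Make it an $\Omega$-algebra by $E_k(w,u_1,\dots,u_k)=wu_1\cdots u_k$ for $w\in\Omega_k$ (product in the monoid); $S_{\mathsf M}$ is the closed $\Omega$-subalgebra generated by $X$. The Polish representation $\Phi_X$ is the unique continuous $\Omega$-homomorphism $\overline{\Omega}_X\mathsf{Fin}_\Omega\to S_{\mathsf M}$ with $\Phi_X(x)=x$ for all $x\in X$. *)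

theory Defs
  imports "HOL-Analysis.Analysis"
begin

text \<open>A signature is a type 'o of symbols with an arity function ar.\<close>

definition op_closed :: "('o \<Rightarrow> nat) \<Rightarrow> 'a set \<Rightarrow> ('o \<Rightarrow> (nat \<Rightarrow> 'a) \<Rightarrow> 'a) \<Rightarrow> bool" where
  "op_closed ar A f \<longleftrightarrow> (\<forall>w. \<forall>u \<in> PiE {..<ar w} (\<lambda>_. A). f w u \<in> A)"

definition alg_hom :: "('o \<Rightarrow> nat) \<Rightarrow> 'a set \<Rightarrow> ('o \<Rightarrow> (nat \<Rightarrow> 'a) \<Rightarrow> 'a)
    \<Rightarrow> 'b set \<Rightarrow> ('o \<Rightarrow> (nat \<Rightarrow> 'b) \<Rightarrow> 'b) \<Rightarrow> ('a \<Rightarrow> 'b) \<Rightarrow> bool" where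
  "alg_hom ar A f B g h \<longleftrightarrow> (\<forall>a\<in>A. h a \<in> B) \<and>
     (\<forall>w. \<forall>u \<in> PiE {..<ar w} (\<lambda>_. A). h (f w u) = g w (\<lambda>i\<in>{..<ar w}. h (u i)))"

text \<open>Finite (discrete) Omega-algebras; as test objects we use algebras whose
  carrier is a finite set of naturals (every finite algebra is isomorphic to one).\<close>
definition finite_alg :: "('o \<Rightarrow> nat) \<Rightarrow> nat set \<Rightarrow> ('o \<Rightarrow> (nat \<Rightarrow> nat) \<Rightarrow> nat) \<Rightarrow> bool" where
  "finite_alg ar B g \<longleftrightarrow> finite B \<and> op_closed ar B g"

definition top_alg :: "('o \<Rightarrow> nat) \<Rightarrow> 'a set \<Rightarrow> ('o \<Rightarrow> (nat \<Rightarrow> 'a) \<Rightarrow> 'a) \<Rightarrow> 'a topology \<Rightarrow> bool" where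
  "top_alg ar A f T \<longleftrightarrow> topspace T = A \<and> op_closed ar A f \<and>
     (\<forall>w. continuous_map (product_topology (\<lambda>_. T) {..<ar w}) T (f w))"

text \<open>Profinite = compact Hausdorff topological algebra that is residually finite
  (points separated by continuous homomorphisms into finite discrete algebras);
  equivalently, an inverse limit of finite algebras.\<close>
definition profinite_alg :: "('o \<Rightarrow> nat) \<Rightarrow> 'a set \<Rightarrow> ('o \<Rightarrow> (nat \<Rightarrow> 'a) \<Rightarrow> 'a) \<Rightarrow> 'a topology \<Rightarrow> bool" where
  "profinite_alg ar A f T \<longleftrightarrow> top_alg ar A f T \<and> compact_space T \<and> Hausdorff_space T \<and>
     (\<forall>x\<in>A. \<forall>y\<in>A. x \<noteq> y \<longrightarrow>
        (\<exists>(B::nat set) g h. finite_alg ar B g \<and> alg_hom ar A f B g h \<and>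
            continuous_map T (discrete_topology B) h \<and> h x \<noteq> h y))"

definition subalg_gen :: "('o \<Rightarrow> nat) \<Rightarrow> 'a set \<Rightarrow> ('o \<Rightarrow> (nat \<Rightarrow> 'a) \<Rightarrow> 'a) \<Rightarrow> 'a set \<Rightarrow> 'a set" where
  "subalg_gen ar A f G = \<Inter> {S. G \<subseteq> S \<and> S \<subseteq> A \<and> op_closed ar S f}"

definition closed_subalg_gen :: "('o \<Rightarrow> nat) \<Rightarrow> 'a set \<Rightarrow> ('o \<Rightarrow> (nat \<Rightarrow> 'a) \<Rightarrow> 'a)
    \<Rightarrow> 'a topology \<Rightarrow> 'a set \<Rightarrow> 'a set" where
  "closed_subalg_gen ar A f T G = \<Inter> {S. G \<subseteq> S \<and> S \<subseteq> A \<and> op_closed ar S f \<and> closedin T S}"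

definition free_profinite_alg :: "('o \<Rightarrow> nat) \<Rightarrow> 'a set \<Rightarrow> ('o \<Rightarrow> (nat \<Rightarrow> 'a) \<Rightarrow> 'a)
    \<Rightarrow> 'a topology \<Rightarrow> ('x \<Rightarrow> 'a) \<Rightarrow> bool" where
  "free_profinite_alg ar A f T \<iota> \<longleftrightarrow> profinite_alg ar A f T \<and> range \<iota> \<subseteq> A \<and>
     T closure_of (subalg_gen ar A f (range \<iota>)) = A \<and>
     (\<forall>(B::nat set) g (k::'x \<Rightarrow> nat). finite_alg ar B g \<and> range k \<subseteq> B \<longrightarrow>
        (\<exists>h. alg_hom ar A f B g h \<and> continuous_map T (discrete_topology B) h \<and> h \<circ> \<iota> = k \<and>
           (\<forall>h'. alg_hom ar A f B g h' \<and> continuous_map T (discrete_topology B) h' \<and> h' \<circ> \<iota> = k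
                 \<longrightarrow> (\<forall>a\<in>A. h' a = h a))))"

definition monoid_on :: "'m set \<Rightarrow> ('m \<Rightarrow> 'm \<Rightarrow> 'm) \<Rightarrow> 'm \<Rightarrow> bool" where
  "monoid_on M m e \<longleftrightarrow> e \<in> M \<and> (\<forall>a\<in>M. \<forall>b\<in>M. m a b \<in> M) \<and>
     (\<forall>a\<in>M. \<forall>b\<in>M. \<forall>c\<in>M. m (m a b) c = m a (m b c)) \<and>
     (\<forall>a\<in>M. m e a = a \<and> m a e = a)"

definition mon_hom :: "'m set \<Rightarrow> ('m \<Rightarrow> 'm \<Rightarrow> 'm) \<Rightarrow> 'm \<Rightarrow> 'n set \<Rightarrow> ('n \<Rightarrow> 'n \<Rightarrow> 'n) \<Rightarrow> 'n
    \<Rightarrow> ('m \<Rightarrow> 'n) \<Rightarrow> bool" where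
  "mon_hom M m e N n d h \<longleftrightarrow> (\<forall>a\<in>M. h a \<in> N) \<and> h e = d \<and>
     (\<forall>a\<in>M. \<forall>b\<in>M. h (m a b) = n (h a) (h b))"

definition finite_monoid :: "nat set \<Rightarrow> (nat \<Rightarrow> nat \<Rightarrow> nat) \<Rightarrow> nat \<Rightarrow> bool" where
  "finite_monoid N n d \<longleftrightarrow> finite N \<and> monoid_on N n d"

definition top_monoid :: "'m set \<Rightarrow> ('m \<Rightarrow> 'm \<Rightarrow> 'm) \<Rightarrow> 'm \<Rightarrow> 'm topology \<Rightarrow> bool" where
  "top_monoid M m e T \<longleftrightarrow> topspace T = M \<and> monoid_on M m e \<and>
     continuous_map (prod_topology T T) T (\<lambda>(a, b). m a b)"

definition profinite_monoid :: "'m set \<Rightarrow> ('m \<Rightarrow> 'm \<Rightarrow> 'm) \<Rightarrow> 'm \<Rightarrow> 'm topology \<Rightarrow> bool" where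
  "profinite_monoid M m e T \<longleftrightarrow> top_monoid M m e T \<and> compact_space T \<and> Hausdorff_space T \<and>
     (\<forall>x\<in>M. \<forall>y\<in>M. x \<noteq> y \<longrightarrow>
        (\<exists>(N::nat set) n d h. finite_monoid N n d \<and> mon_hom M m e N n d h \<and>
            continuous_map T (discrete_topology N) h \<and> h x \<noteq> h y))"

definition submonoid_gen :: "'m set \<Rightarrow> ('m \<Rightarrow> 'm \<Rightarrow> 'm) \<Rightarrow> 'm \<Rightarrow> 'm set \<Rightarrow> 'm set" where
  "submonoid_gen M m e G = \<Inter> {S. G \<subseteq> S \<and> S \<subseteq> M \<and> e \<in> S \<and> (\<forall>a\<in>S. \<forall>b\<in>S. m a b \<in> S)}"

definition free_profinite_monoid :: "'m set \<Rightarrow> ('m \<Rightarrow> 'm \<Rightarrow> 'm) \<Rightarrow> 'm \<Rightarrow> 'm topology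
    \<Rightarrow> ('g \<Rightarrow> 'm) \<Rightarrow> bool" where
  "free_profinite_monoid M m e T j \<longleftrightarrow> profinite_monoid M m e T \<and> range j \<subseteq> M \<and>
     T closure_of (submonoid_gen M m e (range j)) = M \<and>
     (\<forall>(N::nat set) n d (k::'g \<Rightarrow> nat). finite_monoid N n d \<and> range k \<subseteq> N \<longrightarrow>
        (\<exists>h. mon_hom M m e N n d h \<and> continuous_map T (discrete_topology N) h \<and> h \<circ> j = k \<and>
           (\<forall>h'. mon_hom M m e N n d h' \<and> continuous_map T (discrete_topology N) h' \<and> h' \<circ> j = k
                 \<longrightarrow> (\<forall>a\<in>M. h' a = h a))))"

definition polish_op :: "('o \<Rightarrow> nat) \<Rightarrow> ('m \<Rightarrow> 'm \<Rightarrow> 'm) \<Rightarrow> ('x + 'o \<Rightarrow> 'm)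
    \<Rightarrow> 'o \<Rightarrow> (nat \<Rightarrow> 'm) \<Rightarrow> 'm" where
  "polish_op ar m j w u = foldl m (j (Inr w)) (map u [0..<ar w])"

definition polish_S :: "('o \<Rightarrow> nat) \<Rightarrow> 'm set \<Rightarrow> ('m \<Rightarrow> 'm \<Rightarrow> 'm) \<Rightarrow> 'm topology
    \<Rightarrow> ('x + 'o \<Rightarrow> 'm) \<Rightarrow> 'm set" where
  "polish_S ar M m T j = closed_subalg_gen ar M (polish_op ar m j) T (j ` range Inl)"

end

theory Submission
  imports Defs "HOL-Algebra.Group"
begin

(* Fix a symbol w of arity k >= 2 and a generator x, and let P y = w(y, x, ..., x).
   The pairs (u_r, P^(r!) u_r) with u_r = w(P^(r!) x, P^(r!) x, x, ..., x) have a cluster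
   point (p, q) by compactness. A three-element algebra maps every u_r to 2 and every
   P^(r!) u_r to 1, so p ~= q. In the Polish representation P becomes t |-> w t x^(k-1);
   in a finite monoid with n elements and r >= n the powers w^(r!) and x^(r!) are
   idempotent, which makes P^(r!) fix the image of u_r. Continuous homomorphisms into
   finite monoids separate the points of the free profinite monoid, hence Phi p = Phi q. *)

definition pad_op :: "('o \<Rightarrow> nat) \<Rightarrow> ('o \<Rightarrow> (nat \<Rightarrow> 'a) \<Rightarrow> 'a) \<Rightarrow> 'o \<Rightarrow> 'a \<Rightarrow> 'a \<Rightarrow> 'a \<Rightarrow> 'a" where
  "pad_op ar f w x y z = f w (\<lambda>i\<in>{..<ar w}. if i = 0 then y else if i = 1 then z else x)"

definition witness_pair :: "('o \<Rightarrow> nat) \<Rightarrow> ('o \<Rightarrow> (nat \<Rightarrow> 'a) \<Rightarrow> 'a) \<Rightarrow> 'o \<Rightarrow> 'a \<Rightarrow> nat \<Rightarrow> 'a \<times> 'a" where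
  "witness_pair ar f w x r =
     (let P = (\<lambda>y. pad_op ar f w x y x); u = pad_op ar f w x ((P ^^ fact r) x) ((P ^^ fact r) x)
      in (u, (P ^^ fact r) u))"

lemma pad_op_closed:
  assumes "op_closed ar A f" "x \<in> A" "y \<in> A" "z \<in> A"
  shows "pad_op ar f w x y z \<in> A"
  using assms unfolding pad_op_def op_closed_def by (auto simp: restrict_PiE_iff)

lemma alg_hom_pad_op:
  assumes "alg_hom ar A f B g h" "x \<in> A" "y \<in> A" "z \<in> A"
  shows "h (pad_op ar f w x y z) = pad_op ar g w (h x) (h y) (h z)"
proof -
  let ?u = "\<lambda>i\<in>{..<ar w}. if i = 0 then y else if i = 1 then z else x"
  have "?u \<in> PiE {..<ar w} (\<lambda>_. A)"
    using assms(2-4) by (auto simp: restrict_PiE_iff)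
  then have "h (f w ?u) = g w (\<lambda>i\<in>{..<ar w}. h (?u i))"
    using assms(1) unfolding alg_hom_def by blast
  also have "(\<lambda>i\<in>{..<ar w}. h (?u i)) = (\<lambda>i\<in>{..<ar w}. if i = 0 then h y else if i = 1 then h z else h x)"
    by (intro restrict_ext) auto
  finally show ?thesis unfolding pad_op_def .
qed

lemma witness_pair_closed:
  assumes "op_closed ar A f" "x \<in> A"
  shows "witness_pair ar f w x r \<in> A \<times> A"
proof -
  let ?P = "\<lambda>y. pad_op ar f w x y x"
  have P: "(?P ^^ i) y \<in> A" if "y \<in> A" for i y
    using that by (induction i) (auto intro: pad_op_closed[OF assms(1) assms(2)] assms(2))
  show ?thesis
    unfolding witness_pair_def Let_def using P assms by (simp add: pad_op_closed)
qed

lemma alg_hom_witness_pair: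
  assumes hom: "alg_hom ar A f B g h" and "op_closed ar A f" "x \<in> A"
  shows "map_prod h h (witness_pair ar f w x r) = witness_pair ar g w (h x) r"
proof -
  let ?P = "\<lambda>y. pad_op ar f w x y x" and ?Q = "\<lambda>y. pad_op ar g w (h x) y (h x)"
  have closed: "(?P ^^ i) y \<in> A" if "y \<in> A" for i y
    using that by (induction i) (auto intro: pad_op_closed[OF assms(2)] assms(3))
  have iter: "h ((?P ^^ i) y) = (?Q ^^ i) (h y)" if "y \<in> A" for i y
    using that by (induction i) (simp_all add: alg_hom_pad_op[OF hom] closed assms(3))
  show ?thesis
    unfolding witness_pair_def Let_def
    by (simp add: iter alg_hom_pad_op[OF hom] closed pad_op_closed[OF assms(2)] assms(3))
qed

lemma alg_hom_closed: "alg_hom ar A f B g h \<Longrightarrow> a \<in> A \<Longrightarrow> h a \<in> B"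
  unfolding alg_hom_def by blast

lemma alg_hom_comp:
  assumes "alg_hom ar A f B g h" "alg_hom ar B g C k h'"
  shows "alg_hom ar A f C k (h' \<circ> h)"
  unfolding alg_hom_def
proof (intro conjI ballI allI)
  show "(h' \<circ> h) a \<in> C" if "a \<in> A" for a
    using alg_hom_closed[OF assms(2) alg_hom_closed[OF assms(1) that]] by simp
  fix w u assume u: "u \<in> PiE {..<ar w} (\<lambda>_. A)"
  then have hu: "(\<lambda>i\<in>{..<ar w}. h (u i)) \<in> PiE {..<ar w} (\<lambda>_. B)"
    using assms(1) unfolding alg_hom_def by (auto simp: PiE_iff)
  have "(h' \<circ> h) (f w u) = h' (g w (\<lambda>i\<in>{..<ar w}. h (u i)))"
    using assms(1) u unfolding alg_hom_def by simp
  also have "\<dots> = k w (\<lambda>i\<in>{..<ar w}. (h' \<circ> h) (u i))"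
    using assms(2) hu unfolding alg_hom_def by (simp cong: restrict_cong)
  finally show "(h' \<circ> h) (f w u) = k w (\<lambda>i\<in>{..<ar w}. (h' \<circ> h) (u i))" .
qed

lemma alg_hom_mono_codomain:
  "alg_hom ar A f B g h \<Longrightarrow> B \<subseteq> B' \<Longrightarrow> alg_hom ar A f B' g h"
  unfolding alg_hom_def by blast

lemma monoid_on_imp_monoid: "monoid_on N n d \<Longrightarrow> monoid \<lparr>carrier = N, mult = n, one = d\<rparr>"
  unfolding monoid_on_def by unfold_locales auto

lemma foldl_mon_hom:
  assumes "monoid_on M m e" "mon_hom M m e N n d \<kappa>" "a \<in> M" "set xs \<subseteq> M"
  shows "\<kappa> (foldl m a xs) = foldl n (\<kappa> a) (map \<kappa> xs)"
  using assms(3,4)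
proof (induction xs arbitrary: a)
  case (Cons y ys)
  then show ?case
    using assms(1,2) by (simp add: monoid_on_def mon_hom_def)
qed simp

lemma foldl_monoid_on_closed:
  assumes "monoid_on M m e" "a \<in> M" "set xs \<subseteq> M"
  shows "foldl m a xs \<in> M"
  using assms(2,3) by (induction xs arbitrary: a) (use assms(1) in \<open>auto simp: monoid_on_def\<close>)

lemma polish_op_closed:
  assumes "monoid_on M m e" "range j \<subseteq> M"
  shows "op_closed ar M (polish_op ar m j)"
  using assms unfolding op_closed_def polish_op_def
  by (auto intro!: foldl_monoid_on_closed simp: PiE_iff)

lemma polish_S_subset:
  assumes "monoid_on M m e" "range j \<subseteq> M" "topspace T = M"
  shows "polish_S ar M m T j \<subseteq> M"
  using polish_op_closed[OF assms(1,2)] assms(2,3)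
  unfolding polish_S_def closed_subalg_gen_def by (auto intro!: Inter_lower)

lemma mon_hom_alg_hom_polish_op:
  assumes "monoid_on M m e" "mon_hom M m e N n d \<kappa>" "range j \<subseteq> M"
  shows "alg_hom ar M (polish_op ar m j) N (polish_op ar n (\<kappa> \<circ> j)) \<kappa>"
  unfolding alg_hom_def
proof (intro conjI ballI allI)
  show "\<kappa> a \<in> N" if "a \<in> M" for a
    using assms(2) that unfolding mon_hom_def by blast
  fix w u assume "u \<in> PiE {..<ar w} (\<lambda>_. M)"
  then have "\<kappa> (polish_op ar m j w u) = foldl n (\<kappa> (j (Inr w))) (map (\<kappa> \<circ> u) [0..<ar w])"
    unfolding polish_op_def using assms by (subst foldl_mon_hom[OF assms(1,2)]) (auto simp: PiE_iff)
  also have "\<dots> = polish_op ar n (\<kappa> \<circ> j) w (\<lambda>i\<in>{..<ar w}. \<kappa> (u i))"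
    unfolding polish_op_def by (auto intro!: arg_cong[where f = "foldl n _"])
  finally show "\<kappa> (polish_op ar m j w u) = polish_op ar n (\<kappa> \<circ> j) w (\<lambda>i\<in>{..<ar w}. \<kappa> (u i))" .
qed

context monoid
begin

lemma foldl_mult_replicate:
  assumes "a \<in> carrier G" "x \<in> carrier G"
  shows "foldl (\<otimes>) a (replicate L x) = a \<otimes> x [^] L"
proof (induction L)
  case (Suc L)
  have "foldl (\<otimes>) a (replicate (Suc L) x) = foldl (\<otimes>) a (replicate L x) \<otimes> x"
    by (simp flip: replicate_append_same)
  then show ?case
    using Suc assms by (simp add: m_assoc)
qed (use assms in simp)

lemma pad_op_polish_op:
  assumes "2 \<le> ar w" "range j \<subseteq> carrier G" "x \<in> carrier G" "y \<in> carrier G" "z \<in> carrier G"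
  shows "pad_op ar (polish_op ar (\<otimes>) j) w x y z = j (Inr w) \<otimes> y \<otimes> z \<otimes> x [^] (ar w - 2)"
proof -
  let ?v = "\<lambda>i. if i = 0 then y else if i = 1 then z else x"
  have "[0..<ar w] = 0 # 1 # [2..<ar w]"
    using assms(1) by (simp add: upt_conv_Cons numeral_2_eq_2)
  moreover have "map ?v [2..<ar w] = map (\<lambda>_. x) [2..<ar w]"
    by (rule map_cong) auto
  ultimately have "map ?v [0..<ar w] = y # z # replicate (ar w - 2) x"
    by (simp add: map_replicate_const)
  moreover have "map (restrict ?v {..<ar w}) [0..<ar w] = map ?v [0..<ar w]"
    by (rule map_cong) auto
  moreover have "j (Inr w) \<in> carrier G"
    using assms(2) by auto
  ultimately show ?thesis
    unfolding pad_op_def polish_op_def using assms(3-5)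
    by (simp add: foldl_mult_replicate)
qed

lemma nat_pow_eq_imp_periodic:
  fixes i j t q :: nat
  assumes "x \<in> carrier G" "x [^] i = x [^] j" "i \<le> j" "i \<le> t"
  shows "x [^] (t + q * (j - i)) = x [^] t"
proof (induction q)
  case (Suc q)
  have exp: "t + Suc q * (j - i) = (t - i) + j + q * (j - i)"
    using assms(3,4) by simp
  have "x [^] (t + Suc q * (j - i)) = x [^] (t - i) \<otimes> x [^] j \<otimes> x [^] (q * (j - i))"
    unfolding exp using assms(1) by (simp add: nat_pow_mult)
  also have "\<dots> = x [^] (t - i) \<otimes> x [^] i \<otimes> x [^] (q * (j - i))"
    by (simp add: assms(2))
  also have "\<dots> = x [^] (t + q * (j - i))"
    using assms(1,4) by (simp add: nat_pow_mult)
  finally show ?case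
    using Suc by simp
qed simp

lemma nat_pow_fact_idem:
  assumes "finite (carrier G)" "x \<in> carrier G" "card (carrier G) \<le> r"
  shows "x [^] (fact r :: nat) \<otimes> x [^] (fact r :: nat) = x [^] (fact r :: nat)"
proof -
  let ?c = "card (carrier G)"
  have "card ((\<lambda>i. x [^] i) ` {..?c}) \<le> ?c"
    using assms(1,2) by (intro card_mono) auto
  then have "\<not> inj_on (\<lambda>i. x [^] i) {..?c}"
    by (intro pigeonhole) simp
  then obtain i j where ij: "i < j" "j \<le> ?c" "x [^] i = x [^] j"
    unfolding inj_on_def by (metis atMost_iff linorder_neqE_nat)
  have "(j - i) dvd fact r"
    using ij assms(3) by (intro dvd_fact) auto
  then obtain q where q: "fact r = q * (j - i)"
    by (metis dvd_def mult.commute)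
  have "i \<le> fact r"
    using ij assms(3) fact_ge_self[of r] by linarith
  then have "x [^] (fact r + q * (j - i)) = x [^] (fact r :: nat)"
    using ij by (intro nat_pow_eq_imp_periodic[OF assms(2) ij(3)]) simp_all
  then show ?thesis
    using assms(2) by (simp add: nat_pow_mult flip: q)
qed

lemma idem_nat_pow:
  fixes q :: nat
  assumes "e \<in> carrier G" "e \<otimes> e = e" "0 < q"
  shows "e [^] q = e"
  using assms(3)
proof (induction q)
  case (Suc q)
  then show ?case
    using assms(1,2) by (cases q) auto
qed simp

lemma funpow_mult_both_sides:
  assumes "c \<in> carrier G" "g \<in> carrier G" "t \<in> carrier G"
    and P: "\<And>t. t \<in> carrier G \<Longrightarrow> P t = c \<otimes> t \<otimes> g"
  shows "(P ^^ M) t = c [^] M \<otimes> t \<otimes> g [^] M"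
proof (induction M)
  case (Suc M)
  have "(P ^^ Suc M) t = c \<otimes> (c [^] M \<otimes> t \<otimes> g [^] M) \<otimes> g"
    using Suc assms(1-3) by (simp add: P)
  also have "\<dots> = (c \<otimes> c [^] M) \<otimes> t \<otimes> (g [^] M \<otimes> g)"
    using assms(1-3) by (simp add: m_assoc)
  also have "\<dots> = c [^] Suc M \<otimes> t \<otimes> g [^] Suc M"
    by (simp only: nat_pow_Suc2[OF assms(1)] nat_pow_Suc[of g])
  finally show ?case .
qed (use assms in simp)

lemma funpow_idem_exponent:
  fixes L M :: nat
  assumes c: "c \<in> carrier G" and x: "x \<in> carrier G" and idem_x: "x [^] M \<otimes> x [^] M = x [^] M"
    and t: "t \<in> carrier G"
  shows "((\<lambda>t. c \<otimes> t \<otimes> x \<otimes> x [^] L) ^^ M) t = c [^] M \<otimes> t \<otimes> x [^] M"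
proof -
  have "(x \<otimes> x [^] L) [^] M = (x [^] M) [^] Suc L"
    using x by (metis nat_pow_Suc2 nat_pow_pow mult.commute)
  also have "\<dots> = x [^] M"
    using x idem_x by (intro idem_nat_pow) simp_all
  finally show ?thesis
    using funpow_mult_both_sides[OF c _ t, of "x \<otimes> x [^] L"] c x by (simp add: m_assoc)
qed

lemma funpow_fixes_witness:
  fixes L M :: nat
  assumes c: "c \<in> carrier G" and x: "x \<in> carrier G"
    and idem_c: "c [^] M \<otimes> c [^] M = c [^] M" and idem_x: "x [^] M \<otimes> x [^] M = x [^] M"
    and P: "P = (\<lambda>t. c \<otimes> t \<otimes> x \<otimes> x [^] L)"
  shows "(P ^^ M) (c \<otimes> (P ^^ M) x \<otimes> (P ^^ M) x \<otimes> x [^] L) = c \<otimes> (P ^^ M) x \<otimes> (P ^^ M) x \<otimes> x [^] L"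
proof -
  define e where "e = c [^] M"
  define f where "f = x [^] M"
  define l where "l = x [^] L"
  define u where "u = e \<otimes> x \<otimes> f"
  have carrier: "e \<in> carrier G" "f \<in> carrier G" "l \<in> carrier G" "u \<in> carrier G"
    using c x by (simp_all add: e_def f_def l_def u_def)
  have PM: "(P ^^ M) t = e \<otimes> t \<otimes> f" if "t \<in> carrier G" for t
    unfolding P e_def f_def using funpow_idem_exponent[OF c x idem_x that] .
  have ec: "e \<otimes> c = c \<otimes> e"
    using c unfolding e_def by (metis nat_pow_Suc nat_pow_Suc2)
  have lf: "l \<otimes> f = f \<otimes> l"
    using x unfolding f_def l_def by (rule nat_pow_comm)
  have eu: "e \<otimes> u = u"
    using idem_c x carrier unfolding u_def e_def by (simp flip: m_assoc)
  have uf: "u \<otimes> f = u"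
    using idem_x x carrier unfolding u_def f_def by (simp add: m_assoc)
  have "e \<otimes> (c \<otimes> u \<otimes> u \<otimes> l) \<otimes> f = (e \<otimes> c) \<otimes> u \<otimes> u \<otimes> (l \<otimes> f)"
    using c carrier by (simp add: m_assoc)
  also have "\<dots> = c \<otimes> (e \<otimes> u) \<otimes> u \<otimes> (f \<otimes> l)"
    unfolding ec lf using c carrier by (simp add: m_assoc)
  also have "\<dots> = c \<otimes> u \<otimes> (u \<otimes> f) \<otimes> l"
    unfolding eu using c carrier by (simp add: m_assoc)
  finally show ?thesis
    unfolding uf PM[OF x, folded u_def] using c x carrier by (simp add: PM l_def)
qed

lemma witness_pair_polish_op_collapse:
  assumes "finite (carrier G)" "range j \<subseteq> carrier G" "x \<in> carrier G" "2 \<le> ar w"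
    "card (carrier G) \<le> r"
  shows "fst (witness_pair ar (polish_op ar (\<otimes>) j) w x r) = snd (witness_pair ar (polish_op ar (\<otimes>) j) w x r)"
proof -
  let ?f = "polish_op ar (\<otimes>) j"
  define c where "c = j (Inr w)"
  define P where "P = (\<lambda>t. c \<otimes> t \<otimes> x \<otimes> x [^] (ar w - 2))"
  have c: "c \<in> carrier G"
    using assms(2) unfolding c_def by blast
  have pad: "pad_op ar ?f w x y z = c \<otimes> y \<otimes> z \<otimes> x [^] (ar w - 2)"
    if "y \<in> carrier G" "z \<in> carrier G" for y z
    unfolding c_def using assms(4,2,3) that by (rule pad_op_polish_op)
  have iter: "((\<lambda>y. pad_op ar ?f w x y x) ^^ i) y = (P ^^ i) y \<and> (P ^^ i) y \<in> carrier G"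
    if "y \<in> carrier G" for i y
    using that by (induction i) (simp_all add: pad P_def c assms(3))
  define u where "u = (P ^^ fact r) x"
  have u: "u \<in> carrier G" "((\<lambda>y. pad_op ar ?f w x y x) ^^ fact r) x = u"
    using iter[OF assms(3)] unfolding u_def by simp_all
  define v where "v = c \<otimes> u \<otimes> u \<otimes> x [^] (ar w - 2)"
  have v: "v \<in> carrier G" "pad_op ar ?f w x u u = v"
    using c u assms(3) unfolding v_def by (simp_all add: pad)
  have "witness_pair ar ?f w x r = (v, (P ^^ fact r) v)"
    unfolding witness_pair_def Let_def u(2) v(2) using iter[OF v(1)] by simp
  also have "(P ^^ fact r) v = v"
    unfolding v_def u_def
    using funpow_fixes_witness[OF c assms(3) _ _ P_def]
      nat_pow_fact_idem[OF assms(1) c assms(5)] nat_pow_fact_idem[OF assms(1,3,5)] .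
  finally show ?thesis
    by simp
qed

end

lemma alg_hom_polish_op_collapses_witness:
  assumes "monoid_on M m e" "range j \<subseteq> M" "alg_hom ar F opF M (polish_op ar m j) \<Phi>"
    "op_closed ar F opF" "x \<in> F" "2 \<le> ar w"
    "finite_monoid N n d" "mon_hom M m e N n d \<kappa>" "card N \<le> r"
  shows "\<kappa> (\<Phi> (fst (witness_pair ar opF w x r))) = \<kappa> (\<Phi> (snd (witness_pair ar opF w x r)))"
proof -
  interpret N: monoid "\<lparr>carrier = N, mult = n, one = d\<rparr>"
    using assms(7) unfolding finite_monoid_def by (blast intro: monoid_on_imp_monoid)
  have hom: "alg_hom ar F opF N (polish_op ar n (\<kappa> \<circ> j)) (\<kappa> \<circ> \<Phi>)"
    using alg_hom_comp[OF assms(3) mon_hom_alg_hom_polish_op[OF assms(1,8,2)]] .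
  have "range (\<kappa> \<circ> j) \<subseteq> N" and "\<kappa> (\<Phi> x) \<in> N"
    using assms(2,8) alg_hom_closed[OF hom assms(5)] unfolding mon_hom_def by auto
  then have "fst (witness_pair ar (polish_op ar n (\<kappa> \<circ> j)) w (\<kappa> (\<Phi> x)) r)
      = snd (witness_pair ar (polish_op ar n (\<kappa> \<circ> j)) w (\<kappa> (\<Phi> x)) r)"
    using N.witness_pair_polish_op_collapse[of "\<kappa> \<circ> j" "\<kappa> (\<Phi> x)" ar w r] assms(6,7,9)
    unfolding finite_monoid_def by simp
  moreover have "map_prod (\<kappa> \<circ> \<Phi>) (\<kappa> \<circ> \<Phi>) (witness_pair ar opF w x r)
      = witness_pair ar (polish_op ar n (\<kappa> \<circ> j)) w (\<kappa> (\<Phi> x)) r"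
    using alg_hom_witness_pair[OF hom assms(4,5)] by simp
  ultimately show ?thesis
    by (metis comp_apply fst_map_prod snd_map_prod)
qed

definition witness_separating_op :: "'o \<Rightarrow> 'o \<Rightarrow> (nat \<Rightarrow> nat) \<Rightarrow> nat" where
  "witness_separating_op w v u =
     (if v = w then (if u 1 = 0 then 1 else if u 0 = 1 \<and> u 1 = 1 then 2 else 0) else 0)"

lemma finite_alg_witness_separating_op: "finite_alg ar {0, 1, 2} (witness_separating_op w)"
  unfolding finite_alg_def op_closed_def witness_separating_op_def by auto

lemma pad_op_witness_separating_op:
  assumes "2 \<le> ar w"
  shows "pad_op ar (witness_separating_op w) w 0 y z
      = (if z = 0 then 1 else if y = 1 \<and> z = 1 then 2 else 0)"
  using assms unfolding pad_op_def witness_separating_op_def by simp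

lemma witness_pair_witness_separating_op:
  assumes "2 \<le> ar w"
  shows "witness_pair ar (witness_separating_op w) w 0 r = (2, 1)"
proof -
  note pad = pad_op_witness_separating_op[of ar w, OF assms]
  obtain n where n: "fact r = Suc n"
    using fact_gt_zero gr0_implies_Suc by blast
  have P: "((\<lambda>y. pad_op ar (witness_separating_op w) w 0 y 0) ^^ fact r) y = 1" for y
    unfolding n by (simp add: pad)
  show ?thesis
    unfolding witness_pair_def Let_def P by (simp add: pad)
qed

lemma free_profinite_alg_separates_witness:
  assumes "free_profinite_alg ar F opF TF \<iota>" "2 \<le> ar w"
  obtains h :: "'f \<Rightarrow> nat" where "continuous_map TF (discrete_topology {0, 1, 2}) h"
    and "\<And>r. map_prod h h (witness_pair ar opF w (\<iota> x) r) = (2, 1)"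
proof -
  have closed: "op_closed ar F opF"
    using assms(1) unfolding free_profinite_alg_def profinite_alg_def top_alg_def by blast
  have gen: "\<iota> x \<in> F"
    using assms(1) unfolding free_profinite_alg_def by blast
  have "\<And>(B::nat set) g k. finite_alg ar B g \<Longrightarrow> range k \<subseteq> B \<Longrightarrow>
      \<exists>h. alg_hom ar F opF B g h \<and> continuous_map TF (discrete_topology B) h \<and> h \<circ> \<iota> = k"
    using assms(1) unfolding free_profinite_alg_def by blast
  from this[OF finite_alg_witness_separating_op, of "\<lambda>_. 0"]
  obtain h where hom: "alg_hom ar F opF {0, 1, 2} (witness_separating_op w) h"
    and cont: "continuous_map TF (discrete_topology {0, 1, 2}) h" and "h \<circ> \<iota> = (\<lambda>_. 0)"
    by auto
  then have "h (\<iota> x) = 0"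
    by (metis comp_apply)
  then have "map_prod h h (witness_pair ar opF w (\<iota> x) r) = (2, 1)" for r
    using alg_hom_witness_pair[OF hom closed gen, of w r] witness_pair_witness_separating_op[of ar w, OF assms(2)]
    by simp
  with cont show ?thesis
    by (rule that)
qed

lemma compact_space_tail_closures_nonempty:
  fixes s :: "nat \<Rightarrow> 'a"
  assumes "compact_space Z" "range s \<subseteq> topspace Z"
  shows "(\<Inter>r. Z closure_of (s ` {r..})) \<noteq> {}"
proof -
  have "s ` {r..} \<subseteq> Z closure_of (s ` {r..})" for r
    using assms(2) by (intro closure_of_subset) auto
  then show ?thesis
    by (intro compact_space_imp_nest[OF assms(1)])
      (auto simp: decseq_def intro!: closure_of_mono image_mono)
qed

lemma tail_closures_subset_topspace:
  fixes s :: "nat \<Rightarrow> 'a"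
  shows "(\<Inter>r. Z closure_of (s ` {r..})) \<subseteq> topspace Z"
proof -
  have "(\<Inter>r. Z closure_of (s ` {r..})) \<subseteq> Z closure_of (s ` {0..})"
    by (rule INT_lower) simp
  also have "\<dots> \<subseteq> topspace Z"
    by (rule closure_of_subset_topspace)
  finally show ?thesis .
qed

lemma tail_closures_continuous_map_closedin:
  fixes s :: "nat \<Rightarrow> 'a"
  assumes "z \<in> (\<Inter>r. Z closure_of (s ` {r..}))" "continuous_map Z Y \<phi>" "closedin Y C"
    "\<And>r. r0 \<le> r \<Longrightarrow> \<phi> (s r) \<in> C"
  shows "\<phi> z \<in> C"
proof -
  have "Z closure_of (topspace Z \<inter> s ` {r0..}) \<subseteq> {y \<in> topspace Z. \<phi> y \<in> C}"
    using assms(2-4) by (intro closure_of_minimal closedin_continuous_map_preimage) auto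
  then show ?thesis
    using assms(1) closure_of_restrict[of Z "s ` {r0..}"] by blast
qed

lemma continuous_map_map_prod_discrete:
  assumes "continuous_map X (discrete_topology B) h"
  shows "continuous_map (prod_topology X X) (discrete_topology (B \<times> B)) (map_prod h h)"
proof -
  have "continuous_map (prod_topology X X) (prod_topology (discrete_topology B) (discrete_topology B))
      (\<lambda>(x, y). (h x, h y))"
    using assms by (simp add: continuous_map_prod_top)
  then show ?thesis
    by (simp add: prod_topology_discrete_topology map_prod_def)
qed

lemma witness_cluster_point_components_distinct:
  assumes "free_profinite_alg ar F opF TF \<iota>" "2 \<le> ar w"
    and pq: "(p, q) \<in> (\<Inter>r. prod_topology TF TF closure_of (witness_pair ar opF w (\<iota> x) ` {r..}))"
  shows "p \<noteq> q"
proof -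
  obtain h where h: "continuous_map TF (discrete_topology {0, 1, 2 :: nat}) h"
    and witness: "\<And>r. map_prod h h (witness_pair ar opF w (\<iota> x) r) = (2, 1)"
    using free_profinite_alg_separates_witness[OF assms(1,2), where x = x] by blast
  have "map_prod h h (p, q) \<in> {(2, 1)}"
    using pq continuous_map_map_prod_discrete[OF h] by (rule tail_closures_continuous_map_closedin) (simp_all add: witness)
  then show ?thesis
    by auto
qed

lemma witness_cluster_point_polish_eq:
  assumes alg: "free_profinite_alg ar F opF TF \<iota>" and mon: "free_profinite_monoid M m e TM j"
    and \<Phi>: "alg_hom ar F opF M (polish_op ar m j) \<Phi>" "continuous_map TF TM \<Phi>" and w: "2 \<le> ar w"
    and pq: "(p, q) \<in> (\<Inter>r. prod_topology TF TF closure_of (witness_pair ar opF w (\<iota> x) ` {r..}))"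
  shows "\<Phi> p = \<Phi> q"
proof (rule ccontr)
  have F: "op_closed ar F opF" "topspace TF = F" "\<iota> x \<in> F"
    using alg unfolding free_profinite_alg_def profinite_alg_def top_alg_def by auto
  have M: "monoid_on M m e" "range j \<subseteq> M"
    and separating: "\<forall>a\<in>M. \<forall>b\<in>M. a \<noteq> b \<longrightarrow> (\<exists>(N::nat set) n d \<kappa>. finite_monoid N n d
        \<and> mon_hom M m e N n d \<kappa> \<and> continuous_map TM (discrete_topology N) \<kappa> \<and> \<kappa> a \<noteq> \<kappa> b)"
    using mon unfolding free_profinite_monoid_def profinite_monoid_def top_monoid_def by auto
  have "(p, q) \<in> topspace (prod_topology TF TF)"
    using tail_closures_subset_topspace pq by (rule subsetD)
  then have "\<Phi> p \<in> M" "\<Phi> q \<in> M"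
    using alg_hom_closed[OF \<Phi>(1)] F(2) by simp_all
  moreover assume "\<Phi> p \<noteq> \<Phi> q"
  ultimately obtain N :: "nat set" and n d \<kappa> where N: "finite_monoid N n d" "mon_hom M m e N n d \<kappa>"
    and \<kappa>: "continuous_map TM (discrete_topology N) \<kappa>" and "\<kappa> (\<Phi> p) \<noteq> \<kappa> (\<Phi> q)"
    using separating by blast
  have "map_prod (\<kappa> \<circ> \<Phi>) (\<kappa> \<circ> \<Phi>) (p, q) \<in> {(v, v) | v. v \<in> N}"
  proof (rule tail_closures_continuous_map_closedin[OF pq])
    show "continuous_map (prod_topology TF TF) (discrete_topology (N \<times> N)) (map_prod (\<kappa> \<circ> \<Phi>) (\<kappa> \<circ> \<Phi>))"
      using continuous_map_compose[OF \<Phi>(2) \<kappa>] by (rule continuous_map_map_prod_discrete)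
    show "map_prod (\<kappa> \<circ> \<Phi>) (\<kappa> \<circ> \<Phi>) (witness_pair ar opF w (\<iota> x) r) \<in> {(v, v) | v. v \<in> N}"
      if "card N \<le> r" for r
    proof -
      obtain a b where ab: "witness_pair ar opF w (\<iota> x) r = (a, b)" "a \<in> F"
        using witness_pair_closed[OF F(1,3)] by blast
      have "\<kappa> (\<Phi> a) = \<kappa> (\<Phi> b)"
        using alg_hom_polish_op_collapses_witness[OF M \<Phi>(1) F(1,3) w N that] unfolding ab(1) by simp
      moreover have "\<kappa> (\<Phi> a) \<in> N"
        using alg_hom_closed[OF \<Phi>(1) ab(2)] N(2) unfolding mon_hom_def by blast
      ultimately show ?thesis
        unfolding ab(1) by simp
    qed
  qed auto
  with \<open>\<kappa> (\<Phi> p) \<noteq> \<kappa> (\<Phi> q)\<close> show False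
    by simp
qed

theorem proposition4p14:
  fixes ar :: "'o::finite \<Rightarrow> nat"
    and F :: "'f set" and opF :: "'o \<Rightarrow> (nat \<Rightarrow> 'f) \<Rightarrow> 'f" and TF :: "'f topology"
    and \<iota> :: "'x::finite \<Rightarrow> 'f"
    and M :: "'m set" and m :: "'m \<Rightarrow> 'm \<Rightarrow> 'm" and e :: 'm and TM :: "'m topology"
    and j :: "'x + 'o \<Rightarrow> 'm"
    and \<Phi> :: "'f \<Rightarrow> 'm"
  assumes "\<exists>w. ar w \<ge> 2"
    and "free_profinite_alg ar F opF TF \<iota>"
    and "free_profinite_monoid M m e TM j"
    and "alg_hom ar F opF (polish_S ar M m TM j) (polish_op ar m j) \<Phi>"
    and "continuous_map TF (subtopology TM (polish_S ar M m TM j)) \<Phi>"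
    and "\<forall>x. \<Phi> (\<iota> x) = j (Inl x)"
  shows "\<not> inj_on \<Phi> F"
proof -
  \<comment> \<open>The values of \<open>\<Phi>\<close> on the generators are irrelevant: no continuous homomorphism
    into the Polish algebra is injective.\<close>
  obtain w where w: "2 \<le> ar w"
    using assms(1) by blast
  fix x :: 'x
  have F: "compact_space TF" "topspace TF = F" "op_closed ar F opF" "\<iota> x \<in> F"
    using assms(2) unfolding free_profinite_alg_def profinite_alg_def top_alg_def by auto
  have M: "monoid_on M m e" "range j \<subseteq> M" "topspace TM = M"
    using assms(3) unfolding free_profinite_monoid_def profinite_monoid_def top_monoid_def by auto
  have "compact_space (prod_topology TF TF)"
    using F(1) by (simp add: compact_space_prod_topology)
  moreover have "range (witness_pair ar opF w (\<iota> x)) \<subseteq> topspace (prod_topology TF TF)"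
    using witness_pair_closed[OF F(3,4)] F(2) by (simp add: image_subset_iff)
  ultimately have "(\<Inter>r. prod_topology TF TF closure_of (witness_pair ar opF w (\<iota> x) ` {r..})) \<noteq> {}"
    by (rule compact_space_tail_closures_nonempty)
  then obtain p q
    where pq: "(p, q) \<in> (\<Inter>r. prod_topology TF TF closure_of (witness_pair ar opF w (\<iota> x) ` {r..}))"
    by (metis ex_in_conv surj_pair)
  then have "(p, q) \<in> F \<times> F"
    using tail_closures_subset_topspace F(2) by (metis subsetD topspace_prod_topology)
  moreover have "p \<noteq> q"
    using witness_cluster_point_components_distinct[OF assms(2) w pq] .
  moreover have "\<Phi> p = \<Phi> q"
  proof (rule witness_cluster_point_polish_eq[OF assms(2,3) _ _ w pq])
    show "alg_hom ar F opF M (polish_op ar m j) \<Phi>"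
      using alg_hom_mono_codomain[OF assms(4) polish_S_subset[OF M]] .
    show "continuous_map TF TM \<Phi>"
      using assms(5) by (rule continuous_map_into_fulltopology)
  qed
  ultimately show ?thesis
    unfolding inj_on_def by auto
qed

end
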